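(* Let $G$ be a $2K_2$-free graph and let $X$ be a minimal dominating set of $G$ with $|X|>\alpha(G)$. Then there is a triangle $T$ (a set of three pairwise adjacent vertices) with $T\subseteq X$ such that $X=T\cup A(T)$, where $A(T)$ is the set of vertices outside $T$ having no neighbour in $T$.
   Context: All graphs are finite, simple and undirected. $2K_2$-free means no induced subgraph isomorphic to the disjoint union of two edges. $\alpha(G)$ is the maximum size of an independent set of $G$. A dominating set is a vertex set $D$ such that every vertex outside $D$ has a neighbour in $D$; it is minimal if no proper subset is dominating. *)

theory Defs
  imports Main
begin

definition simple_graph :: "'a set \<Rightarrow> ('a \<Rightarrow> 'a \<Rightarrow> bool) \<Rightarrow> bool" where
  "simple_graph V E \<longleftrightarrow> finite V \<and> (\<forall>x y. E x y \<longrightarrow> x \<in> V \<and> y \<in> V)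
     \<and> (\<forall>x y. E x y \<longrightarrow> E y x) \<and> (\<forall>x. \<not> E x x)"

definition two_K2_free :: "'a set \<Rightarrow> ('a \<Rightarrow> 'a \<Rightarrow> bool) \<Rightarrow> bool" where
  "two_K2_free V E \<longleftrightarrow> \<not> (\<exists>a\<in>V. \<exists>b\<in>V. \<exists>c\<in>V. \<exists>d\<in>V.
     distinct [a, b, c, d] \<and> E a b \<and> E c d \<and>
     \<not> E a c \<and> \<not> E a d \<and> \<not> E b c \<and> \<not> E b d)"

definition independent_set :: "'a set \<Rightarrow> ('a \<Rightarrow> 'a \<Rightarrow> bool) \<Rightarrow> 'a set \<Rightarrow> bool" where
  "independent_set V E S \<longleftrightarrow> S \<subseteq> V \<and> (\<forall>x\<in>S. \<forall>y\<in>S. \<not> E x y)"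

definition alpha :: "'a set \<Rightarrow> ('a \<Rightarrow> 'a \<Rightarrow> bool) \<Rightarrow> nat" where
  "alpha V E = Max (card ` {S. independent_set V E S})"

definition dominating_set :: "'a set \<Rightarrow> ('a \<Rightarrow> 'a \<Rightarrow> bool) \<Rightarrow> 'a set \<Rightarrow> bool" where
  "dominating_set V E D \<longleftrightarrow> D \<subseteq> V \<and> (\<forall>v\<in>V - D. \<exists>u\<in>D. E v u)"

definition minimal_dominating_set :: "'a set \<Rightarrow> ('a \<Rightarrow> 'a \<Rightarrow> bool) \<Rightarrow> 'a set \<Rightarrow> bool" where
  "minimal_dominating_set V E D \<longleftrightarrow> dominating_set V E D \<and>
     (\<forall>D'. D' \<subset> D \<longrightarrow> \<not> dominating_set V E D')"

definition triangle :: "'a set \<Rightarrow> ('a \<Rightarrow> 'a \<Rightarrow> bool) \<Rightarrow> 'a set \<Rightarrow> bool" where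
  "triangle V E T \<longleftrightarrow> T \<subseteq> V \<and> card T = 3 \<and> (\<forall>x\<in>T. \<forall>y\<in>T. x \<noteq> y \<longrightarrow> E x y)"

definition anti_nbhd :: "'a set \<Rightarrow> ('a \<Rightarrow> 'a \<Rightarrow> bool) \<Rightarrow> 'a set \<Rightarrow> 'a set" where
  "anti_nbhd V E T = {v \<in> V - T. \<forall>t\<in>T. \<not> E v t}"

end

theory Submission
  imports Defs
begin

text \<open>Let Y be the set of vertices of X having a neighbour in X. By minimality every y in Y has a
  private neighbour p y outside X. By 2K2-freeness any two vertices of Y are adjacent or have
  adjacent private neighbours, and no edge inside Y is disjoint from an edge between private
  neighbours. If A is an independent subset of Y, then (X - (Y - A)) together with p (Y - A) has
  |X| > alpha(G) vertices, so p (Y - A) spans an edge. These conditions force Y to be a triangle,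
  and a last application of 2K2-freeness gives X = Y \<union> A(Y).\<close>

lemma simple_graphD:
  assumes "simple_graph V E"
  shows "finite V" and "E x y \<Longrightarrow> x \<in> V" and "E x y \<Longrightarrow> y \<in> V"
    and "E x y \<Longrightarrow> E y x" and "\<not> E x x"
  using assms unfolding simple_graph_def by blast+

lemma two_K2_freeD:
  assumes "two_K2_free V E" "a \<in> V" "b \<in> V" "c \<in> V" "d \<in> V"
    and "distinct [a, b, c, d]" "E a b" "E c d"
  shows "E a c \<or> E a d \<or> E b c \<or> E b d"
  using assms unfolding two_K2_free_def by blast

lemma two_K2_free_pullback:
  assumes "two_K2_free V E" "inj_on f Y" "f ` Y \<subseteq> V"
  shows "two_K2_free Y (\<lambda>a b. E (f a) (f b))"
  unfolding two_K2_free_def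
proof clarify
  fix a b c d
  assume Y: "a \<in> Y" "b \<in> Y" "c \<in> Y" "d \<in> Y" and "distinct [a, b, c, d]"
    and edges: "E (f a) (f b)" "E (f c) (f d)"
    and non_edges: "\<not> E (f a) (f c)" "\<not> E (f a) (f d)" "\<not> E (f b) (f c)" "\<not> E (f b) (f d)"
  moreover have "inj_on f {a, b, c, d}"
    using assms(2) Y by (meson inj_on_subset empty_subsetI insert_subset)
  ultimately have "distinct (map f [a, b, c, d])"
    by (simp only: distinct_map) simp
  then show False
    using two_K2_freeD[OF assms(1), of "f a" "f b" "f c" "f d"] Y assms(3) edges non_edges
    by auto
qed

lemma card_le_alpha:
  assumes "simple_graph V E" "independent_set V E S"
  shows "card S \<le> alpha V E"
proof -
  have "{S. independent_set V E S} \<subseteq> Pow V"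
    unfolding independent_set_def by blast
  then have "finite (card ` {S. independent_set V E S})"
    using simple_graphD(1)[OF assms(1)] by (meson finite_Pow_iff finite_imageI finite_subset)
  then show ?thesis
    using assms(2) unfolding alpha_def by (intro Max_ge) auto
qed

definition non_isolated :: "('a \<Rightarrow> 'a \<Rightarrow> bool) \<Rightarrow> 'a set \<Rightarrow> 'a set" where
  "non_isolated E X = {y \<in> X. \<exists>x\<in>X. E y x}"

definition private_neighbour_map ::
    "'a set \<Rightarrow> ('a \<Rightarrow> 'a \<Rightarrow> bool) \<Rightarrow> 'a set \<Rightarrow> 'a set \<Rightarrow> ('a \<Rightarrow> 'a) \<Rightarrow> bool" where
  "private_neighbour_map V E X B p \<longleftrightarrow>
     (\<forall>y\<in>B. p y \<in> V - X \<and> E (p y) y \<and> (\<forall>x\<in>X - {y}. \<not> E (p y) x))"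

lemma minimal_dominating_set_private_neighbour:
  assumes G: "simple_graph V E" and X: "minimal_dominating_set V E X"
    and y: "y \<in> non_isolated E X"
  shows "\<exists>q\<in>V - X. E q y \<and> (\<forall>x\<in>X - {y}. \<not> E q x)"
proof -
  have "X - {y} \<subset> X" "X \<subseteq> V"
    using X y unfolding minimal_dominating_set_def dominating_set_def non_isolated_def by auto
  then have "\<not> dominating_set V E (X - {y})"
    using X unfolding minimal_dominating_set_def by blast
  then obtain q where q: "q \<in> V" "q \<notin> X - {y}" "\<forall>x\<in>X - {y}. \<not> E q x"
    using \<open>X \<subseteq> V\<close> unfolding dominating_set_def by auto
  have "q \<noteq> y"
    using q y simple_graphD(5)[OF G] unfolding non_isolated_def by blast
  then have "q \<in> V - X"
    using q by blast
  moreover obtain x where "x \<in> X" "E q x"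
    using X \<open>q \<in> V - X\<close> unfolding minimal_dominating_set_def dominating_set_def by blast
  ultimately show ?thesis
    using q by (metis DiffI singletonD)
qed

lemma private_neighbour_map_exists:
  assumes "simple_graph V E" "minimal_dominating_set V E X"
  obtains p where "private_neighbour_map V E X (non_isolated E X) p"
  using minimal_dominating_set_private_neighbour[OF assms]
  unfolding private_neighbour_map_def by metis

lemma private_neighbour_map_inj_on:
  assumes "private_neighbour_map V E X B p" "B \<subseteq> X"
  shows "inj_on p B"
proof (rule inj_onI)
  fix a b assume "a \<in> B" "b \<in> B" "p a = p b"
  then show "a = b"
    using assms unfolding private_neighbour_map_def by (metis DiffI in_mono singletonD)
qed

text \<open>Otherwise (X - B) together with p ` B would be an independent set of size |X|.\<close>

lemma private_neighbour_images_adjacent: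
  assumes G: "simple_graph V E" and XV: "X \<subseteq> V" and large: "alpha V E < card X"
    and p: "private_neighbour_map V E X B p" and BX: "B \<subseteq> X"
    and indep: "\<forall>a\<in>X - B. \<forall>b\<in>X - B. \<not> E a b"
  shows "\<exists>a\<in>B. \<exists>b\<in>B. E (p a) (p b)"
proof (rule ccontr)
  assume no_edge: "\<not> ?thesis"
  let ?S = "(X - B) \<union> p ` B"
  have "independent_set V E ?S"
    using XV indep no_edge p simple_graphD(4)[OF G]
    unfolding independent_set_def private_neighbour_map_def by blast
  then have "card ?S \<le> alpha V E"
    by (rule card_le_alpha[OF G])
  moreover have "card ?S = card X"
  proof -
    have fin: "finite X" "finite B"
      using XV BX simple_graphD(1)[OF G] by (auto intro: finite_subset)
    have "(X - B) \<inter> p ` B = {}"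
      using p unfolding private_neighbour_map_def by auto
    then have "card ?S = card (X - B) + card (p ` B)"
      using fin by (simp add: card_Un_disjoint)
    also have "\<dots> = card (X - B) + card B"
      using card_image[OF private_neighbour_map_inj_on[OF p BX]] by simp
    also have "\<dots> = card X"
      using fin BX by (simp add: card_Diff_subset card_mono)
    finally show ?thesis .
  qed
  ultimately show False
    using large by simp
qed

text \<open>In the application Y is the non-isolated part of the dominating set, R is adjacency and
  Q a b is adjacency of the private neighbours of a and b.\<close>

locale intersecting_cover =
  fixes Y :: "'a set" and R Q :: "'a \<Rightarrow> 'a \<Rightarrow> bool"
  assumes R_sym: "R a b \<Longrightarrow> R b a" and Q_sym: "Q a b \<Longrightarrow> Q b a"
    and R_irrefl: "\<not> R a a" and Q_irrefl: "\<not> Q a a"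
    and R_two_K2_free: "two_K2_free Y R" and Q_two_K2_free: "two_K2_free Y Q"
    and cover: "\<lbrakk>a \<in> Y; b \<in> Y; a \<noteq> b\<rbrakk> \<Longrightarrow> R a b \<or> Q a b"
    and R_Q_intersect:
      "\<lbrakk>a \<in> Y; b \<in> Y; c \<in> Y; d \<in> Y; distinct [a, b, c, d]; R a b\<rbrakk> \<Longrightarrow> \<not> Q c d"
    and R_no_isolated: "a \<in> Y \<Longrightarrow> \<exists>b\<in>Y. R a b"
    and Q_edge_off_R_independent:
      "\<lbrakk>A \<subseteq> Y; \<forall>a\<in>A. \<forall>b\<in>A. \<not> R a b\<rbrakk> \<Longrightarrow> \<exists>a\<in>Y - A. \<exists>b\<in>Y - A. Q a b"
begin

text \<open>All R-edges meet both Q-edges a b and c d, so R a c forces all four R-edges between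
  {a, b} and {c, d}; then no Q-edge joins the two pairs, against 2K2-freeness of Q.\<close>

lemma no_Q_matching_with_R_edge:
  assumes Y: "a \<in> Y" "b \<in> Y" "c \<in> Y" "d \<in> Y" and distinct: "distinct [a, b, c, d]"
    and Q: "Q a b" "Q c d" and R: "R a c"
  shows False
proof -
  have Rbd: "R b d"
    using cover[of b d] R_Q_intersect[of a c b d] Y distinct R by auto
  have "\<not> R a b" "\<not> R c d"
    using R_Q_intersect[of a b c d] R_Q_intersect[of c d a b] Y distinct Q by auto
  then have "R a d \<or> R c b"
    using two_K2_freeD[OF R_two_K2_free, of a c b d] Y distinct R Rbd by auto
  then have "R a d \<and> R b c"
    using cover[of b c] cover[of a d] R_Q_intersect[of a d b c] R_Q_intersect[of c b a d]
      Y distinct R_sym[of c b] by auto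
  then have "\<not> Q a c" "\<not> Q a d" "\<not> Q b c" "\<not> Q b d"
    using R_Q_intersect[of b d a c] R_Q_intersect[of b c a d] R_Q_intersect[of a d b c]
      R_Q_intersect[of a c b d] Y distinct R Rbd by auto
  then show False
    using two_K2_freeD[OF Q_two_K2_free, of a b c d] Y distinct Q by auto
qed

lemma R_complete:
  assumes ab: "a \<in> Y" "b \<in> Y" "a \<noteq> b"
  shows "R a b"
proof (rule ccontr)
  assume not_R: "\<not> R a b"
  then have "Q a b"
    using cover ab by blast
  have "\<forall>x\<in>{a, b}. \<forall>y\<in>{a, b}. \<not> R x y"
    using not_R R_sym R_irrefl by blast
  then obtain c d where cd: "c \<in> Y - {a, b}" "d \<in> Y - {a, b}" "Q c d"
    using Q_edge_off_R_independent[of "{a, b}"] ab by blast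
  then have "c \<noteq> d"
    using Q_irrefl by blast
  obtain e where e: "e \<in> Y" "R a e"
    using R_no_isolated ab by blast
  have "e = c \<or> e = d"
  proof (rule ccontr)
    assume "\<not> (e = c \<or> e = d)"
    then have "distinct [a, e, c, d]"
      using cd e ab not_R R_irrefl \<open>c \<noteq> d\<close> by auto
    then show False
      using R_Q_intersect[of a e c d] cd e ab by auto
  qed
  then show False
    using no_Q_matching_with_R_edge[of a b c d] no_Q_matching_with_R_edge[of a b d c]
      Q_sym[of c d] \<open>Q a b\<close> cd e ab \<open>c \<noteq> d\<close> by auto
qed

lemma card_eq_3: "card Y = 3"
proof -
  obtain u v where uv: "u \<in> Y" "v \<in> Y" "Q u v"
    using Q_edge_off_R_independent[of "{}"] by auto
  then have "u \<noteq> v"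
    using Q_irrefl by blast
  have at_most_one_more: "s = t" if "s \<in> Y - {u, v}" "t \<in> Y - {u, v}" for s t
  proof (rule ccontr)
    assume "s \<noteq> t"
    then have "distinct [s, t, u, v]"
      using that \<open>u \<noteq> v\<close> by auto
    then show False
      using R_complete[of s t] R_Q_intersect[of s t u v] that uv by auto
  qed
  obtain w1 w2 where w12: "w1 \<in> Y - {u}" "w2 \<in> Y - {u}" "Q w1 w2"
    using Q_edge_off_R_independent[of "{u}"] uv R_irrefl[of u] by auto
  then have "w1 \<noteq> w2"
    using Q_irrefl by blast
  then obtain w where w: "w \<in> Y - {u, v}"
    using w12 by blast
  then have "Y = {u, v, w}"
    using at_most_one_more uv by blast
  then show ?thesis
    using w \<open>u \<noteq> v\<close> by auto
qed

end

lemma non_isolated_intersecting_cover: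
  assumes G: "simple_graph V E" and free: "two_K2_free V E"
    and XV: "X \<subseteq> V" and large: "alpha V E < card X"
    and p: "private_neighbour_map V E X (non_isolated E X) p"
  shows "intersecting_cover (non_isolated E X) E (\<lambda>a b. E (p a) (p b))"
proof -
  let ?Y = "non_isolated E X"
  have YX: "?Y \<subseteq> X"
    unfolding non_isolated_def by blast
  have inj: "inj_on p ?Y"
    using private_neighbour_map_inj_on[OF p YX] .
  have pV: "p ` ?Y \<subseteq> V" and p_not_in_X: "\<And>y. y \<in> ?Y \<Longrightarrow> p y \<notin> X"
    and p_edge: "\<And>y. y \<in> ?Y \<Longrightarrow> E y (p y)"
    and p_private: "\<And>y x. y \<in> ?Y \<Longrightarrow> x \<in> X \<Longrightarrow> x \<noteq> y \<Longrightarrow> \<not> E x (p y)"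
    using p simple_graphD(4)[OF G] unfolding private_neighbour_map_def by blast+
  have YV: "?Y \<subseteq> V"
    using YX XV by blast
  show ?thesis
  proof
    show "two_K2_free ?Y E"
      using two_K2_free_pullback[OF free, of "\<lambda>x. x"] YV by simp
    show "two_K2_free ?Y (\<lambda>a b. E (p a) (p b))"
      using two_K2_free_pullback[OF free inj pV] .
  next
    fix a b assume ab: "a \<in> ?Y" "b \<in> ?Y" "a \<noteq> b"
    moreover have "a \<in> X" "b \<in> X" "p a \<notin> X" "p b \<notin> X"
      using ab YX p_not_in_X by blast+
    moreover have "p a \<noteq> p b"
      using inj_on_contraD[OF inj ab(3,1,2)] .
    ultimately have "distinct [a, p a, b, p b]"
      using ab(3) by auto
    moreover have "\<not> E a (p b)" "\<not> E (p a) b"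
      using p_private[of b a] p_private[of a b] simple_graphD(4)[OF G, of "p a" b]
        ab \<open>a \<in> X\<close> \<open>b \<in> X\<close> by auto
    ultimately show "E a b \<or> E (p a) (p b)"
      using two_K2_freeD[OF free, of a "p a" b "p b"] p_edge[OF ab(1)] p_edge[OF ab(2)]
        ab YV pV by blast
  next
    fix a b c d assume Y: "a \<in> ?Y" "b \<in> ?Y" "c \<in> ?Y" "d \<in> ?Y"
      and distinct: "distinct [a, b, c, d]" and "E a b"
    moreover have "a \<in> X" "b \<in> X" "p c \<notin> X" "p d \<notin> X"
      using Y YX p_not_in_X by blast+
    moreover have "p c \<noteq> p d"
      using inj_on_contraD[OF inj _ Y(3,4)] distinct by simp
    ultimately have "distinct [a, b, p c, p d]"
      by auto
    moreover have "\<not> E a (p c)" "\<not> E a (p d)" "\<not> E b (p c)" "\<not> E b (p d)"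
      using p_private Y \<open>a \<in> X\<close> \<open>b \<in> X\<close> distinct by simp_all
    ultimately show "\<not> E (p c) (p d)"
      using two_K2_freeD[OF free, of a b "p c" "p d"] \<open>E a b\<close> Y YV pV by blast
  next
    fix a assume "a \<in> ?Y"
    then show "\<exists>b\<in>?Y. E a b"
      using simple_graphD(4)[OF G] unfolding non_isolated_def by blast
  next
    fix A assume A: "A \<subseteq> ?Y" "\<forall>a\<in>A. \<forall>b\<in>A. \<not> E a b"
    have "private_neighbour_map V E X (?Y - A) p"
      using p unfolding private_neighbour_map_def by blast
    moreover have "\<forall>a\<in>X - (?Y - A). \<forall>b\<in>X - (?Y - A). \<not> E a b"
    proof (intro ballI)
      fix a b assume "a \<in> X - (?Y - A)" "b \<in> X - (?Y - A)"
      then consider "a \<in> A" "b \<in> A" | "a \<in> X - ?Y" "b \<in> X" | "b \<in> X - ?Y" "a \<in> X"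
        by blast
      then show "\<not> E a b"
        by cases (use A simple_graphD(4)[OF G] in \<open>auto simp: non_isolated_def\<close>)
    qed
    ultimately show "\<exists>a\<in>?Y - A. \<exists>b\<in>?Y - A. E (p a) (p b)"
      using private_neighbour_images_adjacent[OF G XV large] YX by blast
  qed (use simple_graphD(4,5)[OF G] in blast)+
qed

lemma dominating_set_eq_union_anti_nbhd:
  assumes G: "simple_graph V E" and free: "two_K2_free V E" and X: "dominating_set V E X"
    and TX: "T \<subseteq> X" and edge: "y \<in> T" "y' \<in> T" "E y y'"
    and isolated: "\<And>x x'. x \<in> X - T \<Longrightarrow> x' \<in> X \<Longrightarrow> \<not> E x x'"
  shows "X = T \<union> anti_nbhd V E T"
proof
  show "X \<subseteq> T \<union> anti_nbhd V E T"
    using X TX isolated unfolding dominating_set_def anti_nbhd_def by blast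
next
  show "T \<union> anti_nbhd V E T \<subseteq> X"
  proof (rule ccontr)
    assume "\<not> ?thesis"
    then obtain v where v: "v \<in> V - X" "\<forall>t\<in>T. \<not> E v t"
      using TX unfolding anti_nbhd_def by blast
    then obtain w where w: "w \<in> X" "E v w"
      using X unfolding dominating_set_def by blast
    then have "w \<notin> T"
      using v by blast
    moreover have "v \<notin> T" "y \<noteq> y'"
      using v TX edge simple_graphD(5)[OF G] by blast+
    ultimately have "distinct [v, w, y, y']"
      using v w edge by auto
    then show False
      using two_K2_freeD[OF free, of v w y y'] v w edge TX isolated \<open>w \<notin> T\<close>
        simple_graphD(2,3)[OF G] by blast
  qed
qed

theorem corollary5p3:
  fixes V :: "'a set" and E :: "'a \<Rightarrow> 'a \<Rightarrow> bool" and X :: "'a set"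
  assumes "simple_graph V E"
    and "two_K2_free V E"
    and "minimal_dominating_set V E X"
    and "card X > alpha V E"
  shows "\<exists>T. triangle V E T \<and> T \<subseteq> X \<and> X = T \<union> anti_nbhd V E T"
proof -
  let ?T = "non_isolated E X"
  have dom: "dominating_set V E X"
    using assms(3) unfolding minimal_dominating_set_def by blast
  then have XV: "X \<subseteq> V" and TX: "?T \<subseteq> X"
    unfolding dominating_set_def non_isolated_def by auto
  obtain p where "private_neighbour_map V E X ?T p"
    using private_neighbour_map_exists[OF assms(1,3)] .
  then interpret intersecting_cover ?T E "\<lambda>a b. E (p a) (p b)"
    by (rule non_isolated_intersecting_cover[OF assms(1,2) XV assms(4)])
  obtain y y' where "y \<in> ?T" "y' \<in> ?T" "E y y'"
    using card_eq_3 R_no_isolated by (metis card.empty ex_in_conv zero_neq_numeral)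
  then have "X = ?T \<union> anti_nbhd V E ?T"
    using dominating_set_eq_union_anti_nbhd[OF assms(1,2) dom TX]
    unfolding non_isolated_def by blast
  moreover have "triangle V E ?T"
    using card_eq_3 R_complete TX XV unfolding triangle_def by blast
  ultimately show ?thesis
    using TX by blast
qed

end
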